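(* Let $G=(V,E)$ be a Generalized Bartlett graph. If $V'\subset V$ and $G'=(V',E')$ is the induced subgraph of $G$ on $V'$, then $G'$ is also a Generalized Bartlett graph.
   Context: For a graph $(V,E)$ with $|V|=p$ and ordering $\sigma:V\to\{1,\dots,p\}$, set $E^\sigma_0=E$, $E^\sigma_i=E^\sigma_{i-1}\cup\{\{u,v\}:u\ne v,\sigma(u)>i,\sigma(v)>i,\{u,\sigma^{-1}(i)\},\{v,\sigma^{-1}(i)\}\in E^\sigma_{i-1}\}$ for $i=1,\dots,p-2$, and $D^\sigma(E)=E^\sigma_{p-2}$. The graph is Generalized Bartlett if there is an ordering $\sigma$ such that there are no $u,v,w$ with $\{u,v\},\{v,w\},\{u,w\}\notin E$ but all three in $D^\sigma(E)$. *)

theory Defs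
  imports Main
begin

definition simple_graph :: "'a set \<Rightarrow> 'a set set \<Rightarrow> bool" where
  "simple_graph V E \<longleftrightarrow> finite V \<and>
     (\<forall>e\<in>E. \<exists>u v. u \<in> V \<and> v \<in> V \<and> u \<noteq> v \<and> e = {u, v})"

definition elim_step :: "'a set \<Rightarrow> ('a \<Rightarrow> nat) \<Rightarrow> nat \<Rightarrow> 'a set set \<Rightarrow> 'a set set" where
  "elim_step V \<sigma> i F = F \<union> {{u, v} | u v. u \<noteq> v \<and> \<sigma> u > i \<and> \<sigma> v > i \<and>
       {u, inv_into V \<sigma> i} \<in> F \<and> {v, inv_into V \<sigma> i} \<in> F}"

fun elim_seq :: "'a set \<Rightarrow> ('a \<Rightarrow> nat) \<Rightarrow> 'a set set \<Rightarrow> nat \<Rightarrow> 'a set set" where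
  "elim_seq V \<sigma> E 0 = E"
| "elim_seq V \<sigma> E (Suc i) = elim_step V \<sigma> (Suc i) (elim_seq V \<sigma> E i)"

text \<open>D^sigma(E) = E^sigma_(p-2), with p = |V| (for p < 2 no steps: D = E).\<close>
definition D_sigma :: "'a set \<Rightarrow> ('a \<Rightarrow> nat) \<Rightarrow> 'a set set \<Rightarrow> 'a set set" where
  "D_sigma V \<sigma> E = elim_seq V \<sigma> E (card V - 2)"

definition generalized_bartlett :: "'a set \<Rightarrow> 'a set set \<Rightarrow> bool" where
  "generalized_bartlett V E \<longleftrightarrow>
     (\<exists>\<sigma>. bij_betw \<sigma> V {1..card V} \<and>
        \<not> (\<exists>u v w. {u, v} \<notin> E \<and> {v, w} \<notin> E \<and> {u, w} \<notin> E \<and>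
               {u, v} \<in> D_sigma V \<sigma> E \<and> {v, w} \<in> D_sigma V \<sigma> E \<and> {u, w} \<in> D_sigma V \<sigma> E))"

definition induced_edges :: "'a set set \<Rightarrow> 'a set \<Rightarrow> 'a set set" where
  "induced_edges E V' = {e \<in> E. e \<subseteq> V'}"

end

theory Submission
  imports Defs
begin

text \<open>Restricting an elimination order of \<open>V\<close> to \<open>V' \<subseteq> V\<close> (renumbered by relative rank)
  and eliminating in the induced subgraph only ever adds fill-in edges that the elimination
  in the whole graph adds as well, at the moment the same vertex is eliminated. Hence
  \<open>D\<^sup>\<tau>(E') \<subseteq> D\<^sup>\<sigma>(E)\<close>, and a bad triangle for the subgraph, whose edges are non-edges of
  \<open>E\<close> since they lie inside \<open>V'\<close>, would be a bad triangle for the whole graph.\<close>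

lemma elim_seq_mono: "i \<le> j \<Longrightarrow> elim_seq V \<sigma> E i \<subseteq> elim_seq V \<sigma> E j"
  by (rule lift_Suc_mono_le[where f="elim_seq V \<sigma> E"]) (auto simp: elim_step_def)

lemma elim_seq_subset_vertices:
  "\<forall>e\<in>E. e \<subseteq> V \<Longrightarrow> e \<in> elim_seq V \<sigma> E k \<Longrightarrow> e \<subseteq> V"
  by (induction k arbitrary: e) (auto simp: elim_step_def)

lemma elim_step_eq_self:
  assumes "inj_on \<sigma> V" "\<sigma> ` V \<subseteq> {..card V}" "\<forall>e\<in>F. e \<subseteq> V" "card V \<le> Suc i"
  shows "elim_step V \<sigma> i F = F"
proof -
  have False if "u \<noteq> v" "i < \<sigma> u" "i < \<sigma> v" "u \<in> V" "v \<in> V" for u v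
  proof -
    have "\<sigma> u \<le> card V" "\<sigma> v \<le> card V" using assms(2) that(4,5) by auto
    then have "\<sigma> u = \<sigma> v" using that(2,3) assms(4) by linarith
    then show False using assms(1) that by (meson inj_onD)
  qed
  moreover have "u \<in> V" if "{u, w} \<in> F" for u w using that assms(3) by blast
  ultimately show ?thesis unfolding elim_step_def by auto
qed

lemma elim_seq_subset_D_sigma:
  assumes "bij_betw \<sigma> V {1..card V}" "\<forall>e\<in>E. e \<subseteq> V"
  shows "elim_seq V \<sigma> E k \<subseteq> D_sigma V \<sigma> E"
proof (cases "k \<le> card V - 2")
  case True
  then show ?thesis unfolding D_sigma_def by (rule elim_seq_mono)
next
  case False
  have stable: "elim_seq V \<sigma> E n = elim_seq V \<sigma> E (card V - 2)" if "card V - 2 \<le> n" for n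
    using that
  proof (induction n rule: dec_induct)
    case (step n)
    have "elim_step V \<sigma> (Suc n) (elim_seq V \<sigma> E n) = elim_seq V \<sigma> E n"
      using assms step(1) elim_seq_subset_vertices[OF assms(2)]
      by (intro elim_step_eq_self) (auto simp: bij_betw_def)
    then show ?case using step(3) by simp
  qed simp
  have "elim_seq V \<sigma> E k = elim_seq V \<sigma> E (card V - 2)" using False by (intro stable) simp
  then show ?thesis unfolding D_sigma_def by simp
qed

lemma elim_step_mono_subgraph:
  assumes "F' \<subseteq> F" "\<forall>e\<in>F'. e \<subseteq> V'" "inv_into V' \<tau> i' = inv_into V \<sigma> i"
    and "\<And>y. y \<in> V' \<Longrightarrow> i' < \<tau> y \<Longrightarrow> i < \<sigma> y"
  shows "elim_step V' \<tau> i' F' \<subseteq> elim_step V \<sigma> i F"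
proof
  fix e assume "e \<in> elim_step V' \<tau> i' F'"
  then consider "e \<in> F'"
    | u v where "e = {u, v}" "u \<noteq> v" "i' < \<tau> u" "i' < \<tau> v"
        "{u, inv_into V' \<tau> i'} \<in> F'" "{v, inv_into V' \<tau> i'} \<in> F'"
    unfolding elim_step_def by blast
  then show "e \<in> elim_step V \<sigma> i F"
  proof cases
    case 1
    with assms(1) show ?thesis unfolding elim_step_def by auto
  next
    case 2
    then have "u \<in> V'" "v \<in> V'" using assms(2) by blast+
    then have "i < \<sigma> u" "i < \<sigma> v" using 2(3,4) assms(4) by blast+
    moreover have "{u, inv_into V \<sigma> i} \<in> F" "{v, inv_into V \<sigma> i} \<in> F"
      using 2(5,6) assms(1,3) by auto
    ultimately show ?thesis using 2(1,2) unfolding elim_step_def by blast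
  qed
qed

definition relative_rank :: "'a set \<Rightarrow> ('a \<Rightarrow> nat) \<Rightarrow> 'a \<Rightarrow> nat" where
  "relative_rank A \<sigma> x = card {y \<in> A. \<sigma> y \<le> \<sigma> x}"

lemma relative_rank_less_iff:
  assumes "finite A" "x \<in> A" "y \<in> A"
  shows "relative_rank A \<sigma> x < relative_rank A \<sigma> y \<longleftrightarrow> \<sigma> x < \<sigma> y"
proof
  assume "\<sigma> x < \<sigma> y"
  then have "y \<in> {z \<in> A. \<sigma> z \<le> \<sigma> y} - {z \<in> A. \<sigma> z \<le> \<sigma> x}"
    and "{z \<in> A. \<sigma> z \<le> \<sigma> x} \<subseteq> {z \<in> A. \<sigma> z \<le> \<sigma> y}"
    using assms(3) by auto
  then have "{z \<in> A. \<sigma> z \<le> \<sigma> x} \<subset> {z \<in> A. \<sigma> z \<le> \<sigma> y}" by blast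
  then show "relative_rank A \<sigma> x < relative_rank A \<sigma> y"
    unfolding relative_rank_def using assms(1) by (simp add: psubset_card_mono)
next
  assume "relative_rank A \<sigma> x < relative_rank A \<sigma> y"
  moreover have "relative_rank A \<sigma> y \<le> relative_rank A \<sigma> x" if "\<sigma> y \<le> \<sigma> x"
    unfolding relative_rank_def using assms(1) that by (intro card_mono) auto
  ultimately show "\<sigma> x < \<sigma> y" by linarith
qed

lemma bij_betw_relative_rank:
  assumes "finite A" "inj_on \<sigma> A"
  shows "bij_betw (relative_rank A \<sigma>) A {1..card A}"
proof -
  have inj: "inj_on (relative_rank A \<sigma>) A"
  proof (rule inj_onI)
    fix x y assume "x \<in> A" "y \<in> A" "relative_rank A \<sigma> x = relative_rank A \<sigma> y"
    then have "\<not> \<sigma> x < \<sigma> y" "\<not> \<sigma> y < \<sigma> x"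
      using relative_rank_less_iff[OF assms(1) \<open>x \<in> A\<close> \<open>y \<in> A\<close>, where \<sigma>=\<sigma>]
        relative_rank_less_iff[OF assms(1) \<open>y \<in> A\<close> \<open>x \<in> A\<close>, where \<sigma>=\<sigma>] by auto
    then have "\<sigma> x = \<sigma> y" by simp
    then show "x = y" using assms(2) \<open>x \<in> A\<close> \<open>y \<in> A\<close> by (simp add: inj_on_eq_iff)
  qed
  have "relative_rank A \<sigma> x \<in> {1..card A}" if "x \<in> A" for x
  proof -
    have "x \<in> {y \<in> A. \<sigma> y \<le> \<sigma> x}" using that by simp
    then have "0 < relative_rank A \<sigma> x"
      unfolding relative_rank_def using assms(1) by (auto simp: card_gt_0_iff)
    moreover have "relative_rank A \<sigma> x \<le> card A"
      unfolding relative_rank_def using assms(1) by (intro card_mono) auto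
    ultimately show ?thesis by simp
  qed
  then have "relative_rank A \<sigma> ` A = {1..card A}"
    using card_image[OF inj] by (intro card_subset_eq) auto
  with inj show ?thesis by (simp add: bij_betw_def)
qed

lemma elim_seq_mono_subgraph:
  assumes "E' \<subseteq> E" "\<forall>e\<in>E'. e \<subseteq> V'" "V' \<subseteq> V"
    and \<sigma>: "bij_betw \<sigma> V {1..card V}" and \<tau>: "bij_betw \<tau> V' {1..card V'}"
    and order: "\<And>x y. x \<in> V' \<Longrightarrow> y \<in> V' \<Longrightarrow> \<tau> x < \<tau> y \<longleftrightarrow> \<sigma> x < \<sigma> y"
  shows "j \<le> card V' \<Longrightarrow> \<sigma> ` {x \<in> V'. \<tau> x \<le> j} \<subseteq> {..i} \<Longrightarrow>
    elim_seq V' \<tau> E' j \<subseteq> elim_seq V \<sigma> E i"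
proof (induction j arbitrary: i)
  case 0
  then show ?case using assms(1) elim_seq_mono[of 0 i V \<sigma> E] by auto
next
  case (Suc j)
  define x where "x = inv_into V' \<tau> (Suc j)"
  have "x \<in> V'" "\<tau> x = Suc j"
    using Suc.prems(1) \<tau> unfolding x_def bij_betw_def by (auto intro: inv_into_into f_inv_into_f)
  then have "x \<in> V" "\<sigma> x \<le> i" using Suc.prems(2) assms(3) by (auto simp: image_subset_iff)
  then have "1 \<le> \<sigma> x" and x_inv: "inv_into V \<sigma> (\<sigma> x) = x"
    using \<sigma> by (auto simp: bij_betw_def)
  have "\<sigma> ` {y \<in> V'. \<tau> y \<le> j} \<subseteq> {..\<sigma> x - 1}"
    using order \<open>x \<in> V'\<close> \<open>\<tau> x = Suc j\<close> by fastforce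
  then have IH: "elim_seq V' \<tau> E' j \<subseteq> elim_seq V \<sigma> E (\<sigma> x - 1)"
    using Suc.prems(1) by (intro Suc.IH) auto
  have "elim_seq V' \<tau> E' (Suc j) \<subseteq> elim_step V \<sigma> (\<sigma> x) (elim_seq V \<sigma> E (\<sigma> x - 1))"
    unfolding elim_seq.simps
  proof (rule elim_step_mono_subgraph[OF IH])
    show "\<forall>e\<in>elim_seq V' \<tau> E' j. e \<subseteq> V'" using elim_seq_subset_vertices assms(2) by blast
    show "inv_into V' \<tau> (Suc j) = inv_into V \<sigma> (\<sigma> x)" using x_inv x_def by simp
    show "\<sigma> x < \<sigma> y" if "y \<in> V'" "Suc j < \<tau> y" for y
      using order[OF \<open>x \<in> V'\<close> that(1)] that(2) \<open>\<tau> x = Suc j\<close> by simp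
  qed
  also have "\<dots> = elim_seq V \<sigma> E (\<sigma> x)"
    using \<open>1 \<le> \<sigma> x\<close> by (metis Suc_diff_1 elim_seq.simps(2) less_eq_Suc_le One_nat_def)
  also have "\<dots> \<subseteq> elim_seq V \<sigma> E i" using \<open>\<sigma> x \<le> i\<close> by (rule elim_seq_mono)
  finally show ?case .
qed

lemma D_sigma_induced_subset:
  assumes "finite V" "\<forall>e\<in>E. e \<subseteq> V" "V' \<subseteq> V" and \<sigma>: "bij_betw \<sigma> V {1..card V}"
  shows "D_sigma V' (relative_rank V' \<sigma>) (induced_edges E V') \<subseteq> D_sigma V \<sigma> E"
proof -
  define \<tau> where "\<tau> = relative_rank V' \<sigma>"
  have "finite V'" using assms(1,3) by (rule finite_subset[rotated])
  have \<tau>: "bij_betw \<tau> V' {1..card V'}"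
    unfolding \<tau>_def using \<open>finite V'\<close> \<sigma> assms(3)
    by (intro bij_betw_relative_rank) (auto simp: bij_betw_def intro: inj_on_subset)
  have E': "induced_edges E V' \<subseteq> E" "\<forall>e\<in>induced_edges E V'. e \<subseteq> V'"
    unfolding induced_edges_def by auto
  have "\<sigma> x \<le> card V" if "x \<in> V'" for x
    using that assms(3) bij_betw_apply[OF \<sigma>] by fastforce
  then have "D_sigma V' \<tau> (induced_edges E V') \<subseteq> elim_seq V \<sigma> E (card V)"
    unfolding D_sigma_def
    by (intro elim_seq_mono_subgraph[OF E' assms(3) \<sigma> \<tau>])
       (auto simp: \<tau>_def relative_rank_less_iff[OF \<open>finite V'\<close>] bij_betw_def)
  also have "\<dots> \<subseteq> D_sigma V \<sigma> E" using \<sigma> assms(2) by (rule elim_seq_subset_D_sigma)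
  finally show ?thesis unfolding \<tau>_def .
qed

theorem lemma11:
  fixes V V' :: "'a set" and E :: "'a set set"
  assumes "simple_graph V E"
    and "generalized_bartlett V E"
    and "V' \<subseteq> V"
  shows "generalized_bartlett V' (induced_edges E V')"
proof -
  define E' where "E' = induced_edges E V'"
  obtain \<sigma> where \<sigma>: "bij_betw \<sigma> V {1..card V}" and no_bad_triangle:
    "\<not> (\<exists>u v w. {u, v} \<notin> E \<and> {v, w} \<notin> E \<and> {u, w} \<notin> E \<and>
               {u, v} \<in> D_sigma V \<sigma> E \<and> {v, w} \<in> D_sigma V \<sigma> E \<and> {u, w} \<in> D_sigma V \<sigma> E)"
    using assms(2) unfolding generalized_bartlett_def by blast
  define \<tau> where "\<tau> = relative_rank V' \<sigma>"
  have "finite V" "\<forall>e\<in>E. e \<subseteq> V" using assms(1) unfolding simple_graph_def by auto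
  then have \<tau>: "bij_betw \<tau> V' {1..card V'}"
    unfolding \<tau>_def using \<sigma> assms(3)
    by (intro bij_betw_relative_rank) (auto simp: bij_betw_def intro: inj_on_subset finite_subset)
  have D_subset: "D_sigma V' \<tau> E' \<subseteq> D_sigma V \<sigma> E"
    unfolding \<tau>_def E'_def using \<open>finite V\<close> \<open>\<forall>e\<in>E. e \<subseteq> V\<close> assms(3) \<sigma>
    by (rule D_sigma_induced_subset)
  have "e \<notin> E" if "e \<in> D_sigma V' \<tau> E'" "e \<notin> E'" for e
  proof -
    have "\<forall>e\<in>E'. e \<subseteq> V'" unfolding E'_def induced_edges_def by blast
    then have "e \<subseteq> V'" using that(1) unfolding D_sigma_def by (rule elim_seq_subset_vertices)
    then show ?thesis using that(2) unfolding E'_def induced_edges_def by blast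
  qed
  with D_subset no_bad_triangle have "\<not> (\<exists>u v w. {u, v} \<notin> E' \<and> {v, w} \<notin> E' \<and> {u, w} \<notin> E' \<and>
      {u, v} \<in> D_sigma V' \<tau> E' \<and> {v, w} \<in> D_sigma V' \<tau> E' \<and> {u, w} \<in> D_sigma V' \<tau> E')"
    by blast
  with \<tau> show ?thesis unfolding E'_def generalized_bartlett_def by blast
qed

end
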